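(* Let $P,Q$ be distributions on a space $\mathcal{X}$, let $\mathcal{F}\subseteq\mathbb{R}^{\mathcal{X}}$ be a model class, let $y:\mathcal{X}\to\mathbb{R}$ be a labeling function, and let $\tau=\tau(P,Q,\mathcal{F})$. Suppose there exist $f^\star\in\mathcal{F}$ and $\epsilon_{\mathcal{F}}\ge 0$ with $$\mathbb{E}_{x\sim\frac12(P+Q)}\big[(y(x)-f^\star(x))^2\big]\le \epsilon_{\mathcal{F}}.$$ Then for every $f\in\mathcal{F}$, $$\mathbb{E}_{Q}\big[(y(x)-f(x))^2\big]\le (8\tau+4)\epsilon_{\mathcal{F}}+4\tau\, \mathbb{E}_{P}\big[(y(x)-f(x))^2\big].$$
   Context: For distributions $P,Q$ on $\mathcal{X}$ and a class $\mathcal{F}$ of real functions on $\mathcal{X}$, the $\mathcal{F}$-restricted error ratio is $$\tau(P,Q,\mathcal{F})=\sup_{f,g\in\mathcal{F}}\frac{\mathbb{E}_{x\sim Q}[(f(x)-g(x))^2]}{\mathbb{E}_{x\sim P}[(f(x)-g(x))^2]},$$ with the convention $0/0=0$ (a ratio with zero denominator and positive numerator is $+\infty$). $\frac12(P+Q)$ denotes the equal mixture of $P$ and $Q$. *)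

theory Defs
  imports "HOL-Probability.Probability"
begin

definition err_ratio :: "real \<Rightarrow> real \<Rightarrow> ereal" where
  "err_ratio a b = (if b = 0 then (if a = 0 then 0 else \<infinity>) else ereal (a / b))"

definition restricted_error_ratio ::
  "'a measure \<Rightarrow> 'a measure \<Rightarrow> ('a \<Rightarrow> real) set \<Rightarrow> ereal" where
  "restricted_error_ratio P Q F =
     (SUP fg \<in> F \<times> F. err_ratio (\<integral>x. (fst fg x - snd fg x)\<^sup>2 \<partial>Q)
                                (\<integral>x. (fst fg x - snd fg x)\<^sup>2 \<partial>P))"

definition mix_expectation :: "'a measure \<Rightarrow> 'a measure \<Rightarrow> ('a \<Rightarrow> real) \<Rightarrow> real" where
  "mix_expectation P Q h = (1/2) * (\<integral>x. h x \<partial>P) + (1/2) * (\<integral>x. h x \<partial>Q)"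

end

theory Submission
  imports Defs
begin

text \<open>Split the error of f on Q at f*: the Q-part through f* is bounded by the mixture error, and
  the distance between f* and f transfers from Q to P at the price of the factor \<open>\<tau>\<close>. Splitting
  that P-distance at y once more, each split by the relaxed triangle inequality
  \<open>(a - c)\<^sup>2 \<le> 2 (a - b)\<^sup>2 + 2 (b - c)\<^sup>2\<close>, gives the bound.\<close>

lemma square_diff_le: "((a::real) - c)\<^sup>2 \<le> 2 * (a - b)\<^sup>2 + 2 * (b - c)\<^sup>2"
  using sum_squares_ge_zero[of "a - 2 * b + c" 0] by (simp add: power2_eq_square algebra_simps)

lemma integrable_square_diff:
  fixes g h :: "'a \<Rightarrow> real"
  assumes "g \<in> borel_measurable M" "h \<in> borel_measurable M"
    and "integrable M (\<lambda>x. (g x)\<^sup>2)" "integrable M (\<lambda>x. (h x)\<^sup>2)"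
  shows "integrable M (\<lambda>x. (g x - h x)\<^sup>2)"
proof (rule Bochner_Integration.integrable_bound)
  show "integrable M (\<lambda>x. 2 * (g x)\<^sup>2 + 2 * (h x)\<^sup>2)" using assms by auto
  show "(\<lambda>x. (g x - h x)\<^sup>2) \<in> borel_measurable M" using assms by measurable
  show "AE x in M. norm ((g x - h x)\<^sup>2) \<le> norm (2 * (g x)\<^sup>2 + 2 * (h x)\<^sup>2)"
    using square_diff_le[where a = "g x" and b = 0 and c = "h x" for x] by simp
qed

lemma integral_square_diff_le:
  fixes a b c :: "'a \<Rightarrow> real"
  assumes "a \<in> borel_measurable M" "b \<in> borel_measurable M" "c \<in> borel_measurable M"
    and "integrable M (\<lambda>x. (a x)\<^sup>2)" "integrable M (\<lambda>x. (b x)\<^sup>2)" "integrable M (\<lambda>x. (c x)\<^sup>2)"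
  shows "(\<integral>x. (a x - c x)\<^sup>2 \<partial>M)
    \<le> 2 * (\<integral>x. (a x - b x)\<^sup>2 \<partial>M) + 2 * (\<integral>x. (b x - c x)\<^sup>2 \<partial>M)"
proof -
  have ab: "integrable M (\<lambda>x. (a x - b x)\<^sup>2)" and bc: "integrable M (\<lambda>x. (b x - c x)\<^sup>2)"
    and ac: "integrable M (\<lambda>x. (a x - c x)\<^sup>2)"
    using integrable_square_diff assms by blast+
  have "(\<integral>x. (a x - c x)\<^sup>2 \<partial>M) \<le> (\<integral>x. 2 * (a x - b x)\<^sup>2 + 2 * (b x - c x)\<^sup>2 \<partial>M)"
    using ab bc ac square_diff_le by (intro integral_mono) auto
  also have "\<dots> = 2 * (\<integral>x. (a x - b x)\<^sup>2 \<partial>M) + 2 * (\<integral>x. (b x - c x)\<^sup>2 \<partial>M)"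
    using ab bc by simp
  finally show ?thesis .
qed

lemma err_ratio_le_ereal_imp:
  assumes "err_ratio a b \<le> ereal t" "b \<ge> 0"
  shows "a \<le> t * b"
  using assms by (cases "b = 0") (auto simp: err_ratio_def split: if_splits simp: divide_le_eq)

lemma err_ratio_le_restricted_error_ratio:
  assumes "f \<in> F" "g \<in> F"
  shows "err_ratio (\<integral>x. (f x - g x)\<^sup>2 \<partial>Q) (\<integral>x. (f x - g x)\<^sup>2 \<partial>P)
    \<le> restricted_error_ratio P Q F"
  unfolding restricted_error_ratio_def using assms by (intro SUP_upper2[of "(f, g)"]) auto

lemma restricted_error_ratio_nonneg:
  assumes "F \<noteq> {}"
  shows "0 \<le> restricted_error_ratio P Q F"
proof -
  obtain f where "f \<in> F" using assms by blast
  from err_ratio_le_restricted_error_ratio[OF this this, of Q P]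
  show ?thesis by (simp add: err_ratio_def)
qed

lemma restricted_error_ratio_transfer:
  assumes "f \<in> F" "g \<in> F" "restricted_error_ratio P Q F \<noteq> \<infinity>"
  shows "(\<integral>x. (f x - g x)\<^sup>2 \<partial>Q)
    \<le> real_of_ereal (restricted_error_ratio P Q F) * (\<integral>x. (f x - g x)\<^sup>2 \<partial>P)"
proof (rule err_ratio_le_ereal_imp)
  have "0 \<le> restricted_error_ratio P Q F"
    using assms(1) by (intro restricted_error_ratio_nonneg) auto
  then have "restricted_error_ratio P Q F = ereal (real_of_ereal (restricted_error_ratio P Q F))"
    using assms(3) by (cases "restricted_error_ratio P Q F") auto
  with err_ratio_le_restricted_error_ratio[OF assms(1,2)]
  show "err_ratio (\<integral>x. (f x - g x)\<^sup>2 \<partial>Q) (\<integral>x. (f x - g x)\<^sup>2 \<partial>P)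
    \<le> ereal (real_of_ereal (restricted_error_ratio P Q F))" by metis
qed simp

theorem mainTheorem1:
  fixes P Q :: "'a measure" and F :: "('a \<Rightarrow> real) set" and y :: "'a \<Rightarrow> real"
    and fstar :: "'a \<Rightarrow> real" and eps :: real
  assumes "prob_space P" and "prob_space Q" and "sets Q = sets P"
    and "y \<in> borel_measurable P"
    and "integrable P (\<lambda>x. (y x)\<^sup>2)" and "integrable Q (\<lambda>x. (y x)\<^sup>2)"
    and "\<And>f. f \<in> F \<Longrightarrow> f \<in> borel_measurable P"
    and "\<And>f. f \<in> F \<Longrightarrow> integrable P (\<lambda>x. (f x)\<^sup>2)"
    and "\<And>f. f \<in> F \<Longrightarrow> integrable Q (\<lambda>x. (f x)\<^sup>2)"
    and "restricted_error_ratio P Q F \<noteq> \<infinity>"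
    and "fstar \<in> F" and "eps \<ge> 0"
    and "mix_expectation P Q (\<lambda>x. (y x - fstar x)\<^sup>2) \<le> eps"
  shows "\<forall>f \<in> F.
    (\<integral>x. (y x - f x)\<^sup>2 \<partial>Q)
      \<le> (8 * real_of_ereal (restricted_error_ratio P Q F) + 4) * eps
         + 4 * real_of_ereal (restricted_error_ratio P Q F) * (\<integral>x. (y x - f x)\<^sup>2 \<partial>P)"
proof
  fix f assume "f \<in> F"
  let ?t = "real_of_ereal (restricted_error_ratio P Q F)"
  have t_nonneg: "0 \<le> ?t"
    using restricted_error_ratio_nonneg[of F P Q] \<open>fstar \<in> F\<close> by (auto intro: real_of_ereal_pos)
  have measurable_Q: "g \<in> borel_measurable Q" if "g \<in> borel_measurable P" for g
    using that measurable_cong_sets[OF \<open>sets Q = sets P\<close> refl] by blast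
  have "(\<integral>x. (y x - fstar x)\<^sup>2 \<partial>P) + (\<integral>x. (y x - fstar x)\<^sup>2 \<partial>Q) \<le> 2 * eps"
    using assms(13) unfolding mix_expectation_def by simp
  then have star_P: "(\<integral>x. (fstar x - y x)\<^sup>2 \<partial>P) \<le> 2 * eps"
    and star_Q: "(\<integral>x. (y x - fstar x)\<^sup>2 \<partial>Q) \<le> 2 * eps"
    by (simp_all add: power2_commute) (smt (verit) integral_nonneg_AE AE_I2 zero_le_power2)+
  have "(\<integral>x. (y x - f x)\<^sup>2 \<partial>Q)
      \<le> 2 * (\<integral>x. (y x - fstar x)\<^sup>2 \<partial>Q) + 2 * (\<integral>x. (fstar x - f x)\<^sup>2 \<partial>Q)"
    by (rule integral_square_diff_le) (use assms \<open>f \<in> F\<close> measurable_Q in auto)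
  moreover have "(\<integral>x. (fstar x - f x)\<^sup>2 \<partial>Q) \<le> ?t * (\<integral>x. (fstar x - f x)\<^sup>2 \<partial>P)"
    using restricted_error_ratio_transfer \<open>f \<in> F\<close> assms(10,11) by blast
  moreover have "(\<integral>x. (fstar x - f x)\<^sup>2 \<partial>P)
      \<le> 2 * (\<integral>x. (fstar x - y x)\<^sup>2 \<partial>P) + 2 * (\<integral>x. (y x - f x)\<^sup>2 \<partial>P)"
    by (rule integral_square_diff_le) (use assms \<open>f \<in> F\<close> in auto)
  then have "?t * (\<integral>x. (fstar x - f x)\<^sup>2 \<partial>P) \<le> ?t * (4 * eps + 2 * (\<integral>x. (y x - f x)\<^sup>2 \<partial>P))"
    using star_P t_nonneg by (intro mult_left_mono) auto
  ultimately show "(\<integral>x. (y x - f x)\<^sup>2 \<partial>Q) \<le> (8 * ?t + 4) * eps + 4 * ?t * (\<integral>x. (y x - f x)\<^sup>2 \<partial>P)"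
    using star_Q by (simp add: algebra_simps)
qed

end
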